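(* Let $0<\mu<1$, $e=(1-\mu,0)$, $s=(-\mu,0)$ and $$V(q)=-\frac{\mu}{|q-e|}-\frac{1-\mu}{|q-s|}-\frac12|q|^2,\qquad q\in\mathbb{R}^2\setminus\{e,s\}.$$ Let $\ell_2,\ell_3$ be the collinear Lagrange points defined in the context, and let $c<\min\{V(\ell_2),V(\ell_3)\}$. Then the set of points $q$ in the bounded Hill's region $\mathfrak{K}_c^b$ at which $\frac{\partial V}{\partial q_2}(q)=0$ is exactly $\mathfrak{K}_c^b\cap\{q_2=0\}$.
   Context: The function $u(x)=V(x,0)$ is strictly concave on each of the intervals $(-\infty,-\mu)$, $(-\mu,1-\mu)$, $(1-\mu,\infty)$ and tends to $-\infty$ at their endpoints. Its unique maxima on these intervals are denoted $\ell_3<-\mu$, $\ell_1\in(-\mu,1-\mu)$ and $\ell_2>1-\mu$ (as points $(\ell_i,0)$). They are critical points of $V$ with $V(\ell_1)<V(\ell_2)$ and $V(\ell_1)<V(\ell_3)$. The Hill's region is $\mathfrak{K}_c=\{q\in\mathbb{R}^2\setminus\{e,s\}:V(q)\le c\}$. For $c<\min\{V(\ell_2),V(\ell_3)\}$ it consists of one unbounded connected component and a bounded part $\mathfrak{K}_c^b$, the union of the bounded components. This bounded part is a single component containing $e,s$ in its closure if $c\ge V(\ell_1)$, and two components, one around each primary, if $c<V(\ell_1)$. *)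

theory Defs
  imports "HOL-Analysis.Analysis"
begin

definition prim_e :: "real \<Rightarrow> real \<times> real" where
  "prim_e \<mu> = (1 - \<mu>, 0)"

definition prim_s :: "real \<Rightarrow> real \<times> real" where
  "prim_s \<mu> = (- \<mu>, 0)"

definition effpot :: "real \<Rightarrow> real \<times> real \<Rightarrow> real" where
  "effpot \<mu> q = - \<mu> / dist q (prim_e \<mu>) - (1 - \<mu>) / dist q (prim_s \<mu>) - (1/2) * (norm q)\<^sup>2"

definition lagr2 :: "real \<Rightarrow> real" where
  "lagr2 \<mu> = (THE x. x > 1 - \<mu> \<and> (\<forall>y. y > 1 - \<mu> \<longrightarrow> effpot \<mu> (y, 0) \<le> effpot \<mu> (x, 0)))"

definition lagr3 :: "real \<Rightarrow> real" where
  "lagr3 \<mu> = (THE x. x < - \<mu> \<and> (\<forall>y. y < - \<mu> \<longrightarrow> effpot \<mu> (y, 0) \<le> effpot \<mu> (x, 0)))"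

definition hill :: "real \<Rightarrow> real \<Rightarrow> (real \<times> real) set" where
  "hill \<mu> c = {q. q \<noteq> prim_e \<mu> \<and> q \<noteq> prim_s \<mu> \<and> effpot \<mu> q \<le> c}"

definition hill_bdd :: "real \<Rightarrow> real \<Rightarrow> (real \<times> real) set" where
  "hill_bdd \<mu> c = {q \<in> hill \<mu> c. bounded (connected_component_set (hill \<mu> c) q)}"

definition dV_dq2 :: "real \<Rightarrow> real \<times> real \<Rightarrow> real" where
  "dV_dq2 \<mu> q = deriv (\<lambda>t. effpot \<mu> (fst q, t)) (snd q)"

end

theory Submission
  imports Defs
begin

text \<open>Off the primaries, \<open>\<partial>V/\<partial>q\<^sub>2 = q\<^sub>2 (\<mu>/r\<^sub>e\<^sup>3 + (1 - \<mu>)/r\<^sub>s\<^sup>3 - 1)\<close>, and the bracket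
decreases as \<open>|q\<^sub>2|\<close> grows with \<open>q\<^sub>1\<close> fixed. So if the derivative vanishes at a point \<open>q\<close> with
\<open>q\<^sub>2 \<noteq> 0\<close>, then \<open>V\<close> does not increase along the vertical ray from \<open>q\<close> away from the axis;
that ray lies in the Hill's region, so the component of \<open>q\<close> is unbounded.\<close>

definition attraction_weight :: "real \<Rightarrow> real \<times> real \<Rightarrow> real" where
  "attraction_weight \<mu> q = \<mu> / dist q (prim_e \<mu>) ^ 3 + (1 - \<mu>) / dist q (prim_s \<mu>) ^ 3"

lemma has_real_derivative_effpot_vertical:
  assumes "(x, t) \<noteq> prim_e \<mu>" and "(x, t) \<noteq> prim_s \<mu>"
  shows "((\<lambda>t. effpot \<mu> (x, t)) has_real_derivative t * (attraction_weight \<mu> (x, t) - 1)) (at t)"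
proof -
  have pos: "(x - (1 - \<mu>))\<^sup>2 + t\<^sup>2 > 0" "(x + \<mu>)\<^sup>2 + t\<^sup>2 > 0"
    using assms by (auto simp: prim_e_def prim_s_def add_pos_nonneg add_nonneg_pos)
  show ?thesis
    using pos
    unfolding effpot_def attraction_weight_def prim_e_def prim_s_def
    by (auto simp: dist_Pair_Pair dist_real_def norm_Pair field_simps power3_eq_cube power2_eq_square
        intro!: derivative_eq_intros)
qed

lemma dV_dq2_eq:
  assumes "q \<noteq> prim_e \<mu>" and "q \<noteq> prim_s \<mu>"
  shows "dV_dq2 \<mu> q = snd q * (attraction_weight \<mu> q - 1)"
  using has_real_derivative_effpot_vertical[of "fst q" "snd q"] assms
  unfolding dV_dq2_def by (auto intro: DERIV_imp_deriv)

lemma dist_vertical_mono: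
  fixes x a t t' :: real
  assumes "\<bar>t\<bar> \<le> \<bar>t'\<bar>"
  shows "dist (x, t) (a, 0) \<le> dist (x, t') (a, 0)"
proof -
  have "t\<^sup>2 \<le> t'\<^sup>2"
    using assms by (metis abs_ge_zero power2_abs power_mono)
  then show ?thesis
    by (simp add: dist_Pair_Pair)
qed

lemma attraction_weight_vertical_antimono:
  assumes "0 \<le> \<mu>" and "\<mu> \<le> 1" and "\<bar>t\<bar> \<le> \<bar>t'\<bar>"
    and "(x, t) \<noteq> prim_e \<mu>" and "(x, t) \<noteq> prim_s \<mu>"
  shows "attraction_weight \<mu> (x, t') \<le> attraction_weight \<mu> (x, t)"
proof -
  have "c / dist (x, t') (a, 0) ^ 3 \<le> c / dist (x, t) (a, 0) ^ 3"
    if "0 \<le> c" and "(x, t) \<noteq> (a, 0)" for a c :: real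
    using that dist_vertical_mono[OF assms(3), of x a]
    by (intro divide_left_mono power_mono mult_pos_pos) auto
  from this[of \<mu> "1 - \<mu>"] this[of "1 - \<mu>" "- \<mu>"] show ?thesis
    using assms unfolding attraction_weight_def prim_e_def prim_s_def by fastforce
qed

lemma effpot_vertical_ray_le:
  assumes "0 \<le> \<mu>" and "\<mu> \<le> 1" and "y \<noteq> 0"
    and "attraction_weight \<mu> (x, y) \<le> 1" and "1 \<le> s"
  shows "effpot \<mu> (x, s * y) \<le> effpot \<mu> (x, y)"
proof -
  have "effpot \<mu> (x, s * y) \<le> effpot \<mu> (x, 1 * y)"
  proof (rule DERIV_nonpos_imp_nonincreasing[OF \<open>1 \<le> s\<close>])
    fix r :: real
    assume "1 \<le> r"
    then have ry: "r * y \<noteq> 0" "\<bar>y\<bar> \<le> \<bar>r * y\<bar>" "0 \<le> r * y * y"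
      using \<open>y \<noteq> 0\<close> by (auto simp: abs_mult mult.assoc)
    have off_primaries: "(x, u) \<noteq> prim_e \<mu>" "(x, u) \<noteq> prim_s \<mu>" if "u \<noteq> 0" for u
      using that by (auto simp: prim_e_def prim_s_def)
    have "attraction_weight \<mu> (x, r * y) \<le> 1"
      using attraction_weight_vertical_antimono[OF assms(1,2) ry(2) off_primaries[OF \<open>y \<noteq> 0\<close>]]
        assms(4) by linarith
    then have "r * y * y * (attraction_weight \<mu> (x, r * y) - 1) \<le> 0"
      using ry(3) by (simp add: mult_nonneg_nonpos)
    moreover have "((\<lambda>s. effpot \<mu> (x, s * y)) has_real_derivative
        r * y * (attraction_weight \<mu> (x, r * y) - 1) * y) (at r)"
      by (rule DERIV_chain2[where g = "\<lambda>s. s * y" and x = r,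
            OF has_real_derivative_effpot_vertical[OF off_primaries[OF ry(1)]]])
        (auto intro!: derivative_eq_intros)
    ultimately show "\<exists>d. ((\<lambda>s. effpot \<mu> (x, s * y)) has_real_derivative d) (at r) \<and> d \<le> 0"
      by (auto simp: algebra_simps)
  qed
  then show ?thesis
    by simp
qed

lemma not_bounded_connected_component_ray:
  fixes p v :: "'a::real_normed_vector"
  assumes "v \<noteq> 0" and "\<And>s. 0 \<le> s \<Longrightarrow> p + s *\<^sub>R v \<in> S"
  shows "\<not> bounded (connected_component_set S p)"
proof
  let ?R = "(\<lambda>s. p + s *\<^sub>R v) ` {0..}"
  assume "bounded (connected_component_set S p)"
  moreover have "?R \<subseteq> connected_component_set S p"
  proof (rule connected_component_maximal)
    show "p \<in> ?R"
      by (rule image_eqI[of _ _ 0]) auto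
    show "connected ?R"
      by (intro connected_continuous_image continuous_intros) auto
  qed (use assms(2) in auto)
  ultimately obtain B where B: "\<And>z. z \<in> ?R \<Longrightarrow> norm z \<le> B"
    by (meson bounded_iff bounded_subset)
  define s where "s = (\<bar>B\<bar> + norm p + 1) / norm v"
  have "0 \<le> s" and sv: "s * norm v = \<bar>B\<bar> + norm p + 1"
    using assms(1) by (auto simp: s_def)
  have "s * norm v - norm p \<le> norm (p + s *\<^sub>R v)"
    using norm_diff_ineq[of "s *\<^sub>R v" p] \<open>0 \<le> s\<close> by (simp add: add.commute)
  also have "\<dots> \<le> B"
    using B \<open>0 \<le> s\<close> by auto
  finally show False
    using sv by linarith
qed

lemma hill_bdd_dV_dq2_zero_imp_on_axis:
  assumes "0 \<le> \<mu>" and "\<mu> \<le> 1" and "q \<in> hill_bdd \<mu> c" and "dV_dq2 \<mu> q = 0"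
  shows "snd q = 0"
proof (rule ccontr)
  obtain x y where q: "q = (x, y)"
    by (cases q)
  assume "snd q \<noteq> 0"
  then have "y \<noteq> 0"
    using q by simp
  have q_hill: "q \<in> hill \<mu> c" and bdd: "bounded (connected_component_set (hill \<mu> c) q)"
    using assms(3) by (auto simp: hill_bdd_def)
  then have "attraction_weight \<mu> q = 1"
    using dV_dq2_eq[of q \<mu>] assms(4) \<open>snd q \<noteq> 0\<close> by (simp add: hill_def)
  have "q + s *\<^sub>R (0, y) \<in> hill \<mu> c" if "0 \<le> s" for s
  proof -
    have "effpot \<mu> (x, (1 + s) * y) \<le> effpot \<mu> (x, y)"
      using effpot_vertical_ray_le[of \<mu> y x "1 + s"] assms(1,2) \<open>y \<noteq> 0\<close>
        \<open>attraction_weight \<mu> q = 1\<close> that q by simp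
    moreover have "(1 + s) * y \<noteq> 0"
      using that \<open>y \<noteq> 0\<close> by simp
    ultimately show ?thesis
      using q_hill q by (auto simp: hill_def prim_e_def prim_s_def algebra_simps)
  qed
  then show False
    using not_bounded_connected_component_ray[of "(0, y)" q "hill \<mu> c"] bdd \<open>y \<noteq> 0\<close>
    by (auto simp: zero_prod_def)
qed

theorem lemma5p1:
  fixes \<mu> c :: real
  assumes "0 < \<mu>" and "\<mu> < 1"
    and "c < min (effpot \<mu> (lagr2 \<mu>, 0)) (effpot \<mu> (lagr3 \<mu>, 0))"
  shows "{q \<in> hill_bdd \<mu> c. dV_dq2 \<mu> q = 0} = hill_bdd \<mu> c \<inter> {q. snd q = 0}"
proof -
  txt \<open>The bound on \<open>c\<close> is deliberately unused: the argument works at every energy level.\<close>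
  have "dV_dq2 \<mu> q = 0" if "q \<in> hill_bdd \<mu> c" and "snd q = 0" for q
    using that dV_dq2_eq[of q \<mu>] by (simp add: hill_bdd_def hill_def)
  then show ?thesis
    using hill_bdd_dV_dq2_zero_imp_on_axis[of \<mu>] assms(1,2) by fastforce
qed

end
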